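(* Let $d\geq 3$. If $G$ is a connected $d$-regular graph of girth $g\geq 3$ on $n$ vertices, then \[ \mathrm{kiss}(G) \leq \frac{n(n(d - 2)+2)}{2\log_{d-1}\left(\frac{n(d-2) + 2}{d}\right)+1} \quad\text{if } g \text{ is odd}, \] and \[ \mathrm{kiss}(G) \leq \frac{nd(n(d -2)+2)}{4\log_{d-1}\left(\frac{n(d-2) + 2}{2}\right)} \quad\text{if } g \text{ is even}, \] with equality if and only if $G$ is a Moore graph.
   Context: Graphs are finite and may have loops and multiple edges. A walk is a sequence of oriented edges, consecutive ones sharing endpoints; a closed geodesic is a closed walk (up to cyclic permutation) that never immediately backtracks along an edge, including at the base point. The girth is the smallest length of a closed geodesic. The kissing number $\mathrm{kiss}(G)$ is the number of distinct shortest oriented cycles in $G$ (oriented cycles of length equal to the girth). A Moore graph is a connected $d$-regular graph of girth $g$ whose number of vertices equals $1 + d \sum_{j=0}^{(g-3)/2} (d-1)^j$ if $g$ is odd and $2 \sum_{j=0}^{(g-2)/2} (d-1)^j$ if $g$ is even. *)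

theory Defs
  imports Complex_Main
begin

text \<open>A finite multigraph (loops and multiple edges allowed) in Serre's dart form:
  V is the vertex set, D the set of oriented edges (darts), rv the orientation-reversing
  fixed-point-free involution, and tail d the tail (initial vertex) of the dart d.
  Each undirected edge corresponds to a pair {d, rv d}; a loop is such a pair with
  tail d = hd d.\<close>

definition mgraph :: "'v set \<Rightarrow> 'e set \<Rightarrow> ('e \<Rightarrow> 'e) \<Rightarrow> ('e \<Rightarrow> 'v) \<Rightarrow> bool" where
  "mgraph V D rv tail \<longleftrightarrow> finite V \<and> finite D \<and>
     (\<forall>e\<in>D. rv e \<in> D \<and> rv e \<noteq> e \<and> rv (rv e) = e \<and> tail e \<in> V)"

definition hd_of :: "('e \<Rightarrow> 'e) \<Rightarrow> ('e \<Rightarrow> 'v) \<Rightarrow> 'e \<Rightarrow> 'v" where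
  "hd_of rv tail e = tail (rv e)"

definition connected_mg :: "'v set \<Rightarrow> 'e set \<Rightarrow> ('e \<Rightarrow> 'e) \<Rightarrow> ('e \<Rightarrow> 'v) \<Rightarrow> bool" where
  "connected_mg V D rv tail \<longleftrightarrow> V \<noteq> {} \<and>
     (\<forall>u\<in>V. \<forall>v\<in>V. (u, v) \<in> {(tail e, hd_of rv tail e) | e. e \<in> D}\<^sup>*)"

text \<open>degree of v = number of darts with tail v (a loop contributes 2)\<close>
definition regular_mg :: "'v set \<Rightarrow> 'e set \<Rightarrow> ('e \<Rightarrow> 'v) \<Rightarrow> nat \<Rightarrow> bool" where
  "regular_mg V D tail d \<longleftrightarrow> (\<forall>v\<in>V. card {e\<in>D. tail e = v} = d)"

definition closed_geodesic :: "'e set \<Rightarrow> ('e \<Rightarrow> 'e) \<Rightarrow> ('e \<Rightarrow> 'v) \<Rightarrow> 'e list \<Rightarrow> bool" where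
  "closed_geodesic D rv tail ds \<longleftrightarrow> ds \<noteq> [] \<and> set ds \<subseteq> D \<and>
     (\<forall>i<length ds. hd_of rv tail (ds ! i) = tail (ds ! ((i + 1) mod length ds)) \<and>
                    ds ! ((i + 1) mod length ds) \<noteq> rv (ds ! i))"

definition girth_mg :: "'e set \<Rightarrow> ('e \<Rightarrow> 'e) \<Rightarrow> ('e \<Rightarrow> 'v) \<Rightarrow> nat" where
  "girth_mg D rv tail = (LEAST k. \<exists>ds. closed_geodesic D rv tail ds \<and> length ds = k)"

definition cyc_class :: "'e list \<Rightarrow> 'e list set" where
  "cyc_class ds = {rotate k ds | k. k < length ds}"

text \<open>kissing number: number of closed geodesics of length the girth, up to cyclic
  permutation (orientation matters)\<close>
definition kiss_mg :: "'e set \<Rightarrow> ('e \<Rightarrow> 'e) \<Rightarrow> ('e \<Rightarrow> 'v) \<Rightarrow> nat" where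
  "kiss_mg D rv tail = card (cyc_class ` {ds. closed_geodesic D rv tail ds \<and>
                                            length ds = girth_mg D rv tail})"

definition moore_number :: "nat \<Rightarrow> nat \<Rightarrow> nat" where
  "moore_number d g = (if odd g then 1 + d * (\<Sum>j\<le>(g - 3) div 2. (d - 1) ^ j)
                       else 2 * (\<Sum>j\<le>(g - 2) div 2. (d - 1) ^ j))"

definition moore_graph :: "'v set \<Rightarrow> 'e set \<Rightarrow> ('e \<Rightarrow> 'e) \<Rightarrow> ('e \<Rightarrow> 'v) \<Rightarrow> bool" where
  "moore_graph V D rv tail \<longleftrightarrow> (\<exists>d. connected_mg V D rv tail \<and> regular_mg V D tail d \<and>
      card V = moore_number d (girth_mg D rv tail))"

end

theory Submission
  imports Defs "HOL-Analysis.Harmonic_Numbers"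
begin

text \<open>
  Call a walk non-backtracking if no dart is followed by its reverse. Two distinct
  non-backtracking walks with common ends have total length at least the girth \<open>g\<close>: cutting
  off their common final segment and closing up leaves a nonempty closed non-backtracking walk.
  Hence a shortest geodesic is determined by its first \<open>g div 2 + 1\<close> darts, and each of the
  \<open>kiss\<close> shortest oriented cycles has \<open>g\<close> distinct rotations, so
  \<open>g * kiss \<le> n d (d - 1)^(g div 2)\<close>, the number of non-backtracking walks of length
  \<open>g div 2 + 1\<close>. The same uniqueness makes the endpoint map injective on the short
  non-backtracking walks issuing from a vertex (odd \<open>g\<close>) or from an edge (even \<open>g\<close>): this is
  the Moore bound \<open>n \<ge> M(d, g)\<close>. When it is attained, every non-backtracking walk of length
  \<open>g div 2 + 1\<close> closes up to a shortest geodesic, so the first bound is attained as well.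

  Put \<open>x\<^sub>0 = (d - 1)^(g div 2)\<close>. The Moore bound says \<open>x\<^sub>0 \<le> x\<close>, where \<open>x = (n(d - 2) + 2)/d\<close>
  for odd \<open>g\<close> and \<open>x = (n(d - 2) + 2)/2\<close> for even \<open>g\<close>, and the first bound says
  \<open>kiss \<le> (n d / 2) \<phi>(x\<^sub>0)\<close> with \<open>\<phi>(t) = t / (log\<^bsub>d-1\<^esub> t + c)\<close>, \<open>c = 1/2\<close> resp. \<open>0\<close>.
  Since \<open>\<phi>\<close> is strictly increasing for \<open>t \<ge> x\<^sub>0\<close>, \<open>kiss \<le> (n d / 2) \<phi>(x)\<close>, which is the
  claimed bound, with equality iff both bounds are attained, i.e. iff the graph is Moore.
\<close>

lemma eq_UN_Cons:
  assumes "[] \<notin> S" and "\<And>e w. e # w \<in> S \<longleftrightarrow> e \<in> E \<and> w \<in> A e"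
  shows "S = (\<Union>e\<in>E. Cons e ` A e)"
proof (intro set_eqI)
  fix x show "x \<in> S \<longleftrightarrow> x \<in> (\<Union>e\<in>E. Cons e ` A e)"
  proof (cases x)
    case (Cons e w)
    then show ?thesis using assms(2)[of e w] by blast
  qed (use assms(1) in blast)
qed

lemma card_UN_Cons:
  assumes "finite E" and "\<And>e. e \<in> E \<Longrightarrow> finite (A e)"
  shows "card (\<Union>e\<in>E. Cons e ` A e) = (\<Sum>e\<in>E. card (A e))"
  using assms by (subst card_UN_disjoint) (auto simp: card_image)

lemma image_eq_if_inj_on_card_eq:
  assumes "inj_on f A" and "f ` A \<subseteq> B" and "finite B" and "card A = card B"
  shows "f ` A = B"
  using assms by (metis card_image card_subset_eq)

section \<open>Non-backtracking walks and the girth\<close>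

locale multigraph =
  fixes V :: "'v set" and D :: "'e set" and rv :: "'e \<Rightarrow> 'e" and tail :: "'e \<Rightarrow> 'v"
  assumes mgraph: "mgraph V D rv tail"
begin

abbreviation head :: "'e \<Rightarrow> 'v" where "head \<equiv> hd_of rv tail"
abbreviation girth :: nat where "girth \<equiv> girth_mg D rv tail"
abbreviation geodesic :: "'e list \<Rightarrow> bool" where "geodesic \<equiv> closed_geodesic D rv tail"
abbreviation kiss :: nat where "kiss \<equiv> kiss_mg D rv tail"

definition nb_step :: "'e \<Rightarrow> 'e \<Rightarrow> bool" where
  "nb_step e f \<longleftrightarrow> head e = tail f \<and> f \<noteq> rv e"

definition nonbacktracking :: "'e list \<Rightarrow> bool" where
  "nonbacktracking w \<longleftrightarrow> set w \<subseteq> D \<and> successively nb_step w"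

definition endpoint :: "'v \<Rightarrow> 'e list \<Rightarrow> 'v" where
  "endpoint a w = (if w = [] then a else head (last w))"

definition nb_walk :: "'v \<Rightarrow> 'e list \<Rightarrow> 'v \<Rightarrow> bool" where
  "nb_walk a w b \<longleftrightarrow> nonbacktracking w \<and> (w \<noteq> [] \<longrightarrow> tail (hd w) = a) \<and> endpoint a w = b"

definition reverse_walk :: "'e list \<Rightarrow> 'e list" where
  "reverse_walk w = rev (map rv w)"

lemma finite_V: "finite V" and finite_D: "finite D"
  using mgraph by (auto simp: mgraph_def)

lemma rv_in_D: "e \<in> D \<Longrightarrow> rv e \<in> D" and rv_neq: "e \<in> D \<Longrightarrow> rv e \<noteq> e"
  and rv_rv [simp]: "e \<in> D \<Longrightarrow> rv (rv e) = e" and tail_in_V: "e \<in> D \<Longrightarrow> tail e \<in> V"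
  using mgraph by (auto simp: mgraph_def)

lemma tail_rv [simp]: "tail (rv e) = head e"
  by (simp add: hd_of_def)

lemma head_rv [simp]: "e \<in> D \<Longrightarrow> head (rv e) = tail e"
  by (simp add: hd_of_def)

lemma head_in_V: "e \<in> D \<Longrightarrow> head e \<in> V"
  using tail_in_V[OF rv_in_D] by simp

lemma nb_step_rv_iff: "e \<in> D \<Longrightarrow> f \<in> D \<Longrightarrow> nb_step (rv f) (rv e) \<longleftrightarrow> nb_step e f"
  unfolding nb_step_def by (metis head_rv rv_rv tail_rv)

lemma nonbacktracking_Nil [simp]: "nonbacktracking []"
  by (simp add: nonbacktracking_def)

lemma nonbacktracking_Cons:
  "nonbacktracking (e # w) \<longleftrightarrow> e \<in> D \<and> nonbacktracking w \<and> (w = [] \<or> nb_step e (hd w))"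
  unfolding nonbacktracking_def successively_Cons by auto

lemma nonbacktracking_append:
  "nonbacktracking (p @ q) \<longleftrightarrow>
     nonbacktracking p \<and> nonbacktracking q \<and> (p = [] \<or> q = [] \<or> nb_step (last p) (hd q))"
  unfolding nonbacktracking_def successively_append_iff by auto

lemma nonbacktracking_take: "nonbacktracking w \<Longrightarrow> nonbacktracking (take k w)"
  using nonbacktracking_append[of "take k w" "drop k w"] by simp

lemma nonbacktracking_in_D: "nonbacktracking w \<Longrightarrow> e \<in> set w \<Longrightarrow> e \<in> D"
  by (auto simp: nonbacktracking_def)

lemma nonbacktracking_reverse_walk:
  assumes "nonbacktracking w"
  shows "nonbacktracking (reverse_walk w)"
proof -
  have w: "set w \<subseteq> D" "successively nb_step w"
    using assms by (auto simp: nonbacktracking_def)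
  have "successively (\<lambda>e f. nb_step (rv f) (rv e)) w"
    using w(2) by (rule successively_mono) (use w(1) nb_step_rv_iff in auto)
  then show ?thesis
    using w rv_in_D
    unfolding nonbacktracking_def reverse_walk_def successively_rev successively_map by auto
qed

lemma nb_walk_Nil [simp]: "nb_walk a [] b \<longleftrightarrow> a = b"
  by (simp add: nb_walk_def endpoint_def)

lemma nb_walk_nonempty:
  "w \<noteq> [] \<Longrightarrow> nb_walk a w b \<longleftrightarrow> nonbacktracking w \<and> tail (hd w) = a \<and> head (last w) = b"
  by (simp add: nb_walk_def endpoint_def)

lemma nb_walk_ConsD: "nb_walk a (e # w) b \<Longrightarrow> nb_walk (head e) w b"
  by (cases "w = []") (auto simp: nb_walk_nonempty nonbacktracking_Cons nb_step_def)

lemma nb_walk_tl: "nb_walk a w b \<Longrightarrow> w \<noteq> [] \<Longrightarrow> nb_walk (head (hd w)) (tl w) b"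
  by (cases w) (auto dest: nb_walk_ConsD)

lemma nb_walk_snocD:
  "nb_walk a (w @ [e]) b \<Longrightarrow> nb_walk a w (tail e)"
  by (cases "w = []") (auto simp: nb_walk_nonempty nonbacktracking_append nb_step_def)

lemma reverse_walk_Nil [simp]: "reverse_walk [] = []"
  and reverse_walk_eq_Nil_iff [simp]: "reverse_walk w = [] \<longleftrightarrow> w = []"
  and length_reverse_walk [simp]: "length (reverse_walk w) = length w"
  by (simp_all add: reverse_walk_def)

lemma hd_reverse_walk: "w \<noteq> [] \<Longrightarrow> hd (reverse_walk w) = rv (last w)"
  and last_reverse_walk: "w \<noteq> [] \<Longrightarrow> last (reverse_walk w) = rv (hd w)"
  by (simp_all add: reverse_walk_def hd_rev last_rev hd_map last_map)

lemma nb_walk_reverse_walk: "nb_walk a w b \<Longrightarrow> nb_walk b (reverse_walk w) a"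
  by (cases "w = []")
     (auto simp: nb_walk_nonempty nonbacktracking_reverse_walk nonbacktracking_in_D
        hd_reverse_walk last_reverse_walk)

lemma nb_walk_append:
  assumes "nb_walk a p b" and "nb_walk b q c" and "p = [] \<or> q = [] \<or> hd q \<noteq> rv (last p)"
  shows "nb_walk a (p @ q) c"
  using assms by (cases "p = []"; cases "q = []")
    (auto simp: nb_walk_nonempty nonbacktracking_append nb_step_def)

lemma nb_walk_append_reverse_walk:
  assumes p: "nb_walk a p b" and q: "nb_walk a q b" and last: "p = [] \<or> q = [] \<or> last p \<noteq> last q"
  shows "nb_walk a (p @ reverse_walk q) a"
proof (rule nb_walk_append[OF p nb_walk_reverse_walk[OF q]])
  have "last q \<in> D" "last p \<in> D" if "p \<noteq> []" "q \<noteq> []"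
    using p q that by (auto simp: nb_walk_nonempty nonbacktracking_def)
  then show "p = [] \<or> reverse_walk q = [] \<or> hd (reverse_walk q) \<noteq> rv (last p)"
    using last by (auto simp: hd_reverse_walk) (metis rv_rv)
qed

lemma closed_geodesic_iff:
  "geodesic w \<longleftrightarrow> w \<noteq> [] \<and> nonbacktracking w \<and> nb_step (last w) (hd w)"
proof (cases "w = []")
  case False
  then obtain m where m: "length w = Suc m" by (cases w) auto
  have "(\<forall>i<length w. nb_step (w ! i) (w ! ((i + 1) mod length w))) \<longleftrightarrow>
      (\<forall>i<m. nb_step (w ! i) (w ! Suc i)) \<and> nb_step (last w) (hd w)"
    unfolding m All_less_Suc using False m by (auto simp: last_conv_nth hd_conv_nth)
  then show ?thesis
    unfolding closed_geodesic_def nonbacktracking_def successively_conv_nth m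
    by (auto simp: nb_step_def)
qed (simp add: closed_geodesic_def)

lemma girth_le_length: "geodesic w \<Longrightarrow> girth \<le> length w"
  unfolding girth_mg_def by (rule Least_le) auto

lemma closed_nb_walk_backtracks:
  assumes w: "nb_walk a w a" "w \<noteq> []" and not_geodesic: "\<not> geodesic w"
  obtains b w' where "nb_walk b w' b" "w' \<noteq> []" "length w = length w' + 2"
proof -
  have nb: "nonbacktracking w" and "tail (hd w) = a" "head (last w) = a"
    using w by (simp_all add: nb_walk_nonempty)
  then have backtrack: "hd w = rv (last w)"
    using not_geodesic w(2) by (auto simp: closed_geodesic_iff nb_step_def)
  obtain e w1 where w1: "w = e # w1"
    using w(2) by (cases w) auto
  have "e \<in> D" using nb w1 by (simp add: nonbacktracking_Cons)
  have "w1 \<noteq> []"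
  proof
    assume "w1 = []"
    then have "rv e = e" using backtrack w1 by simp
    then show False using rv_neq \<open>e \<in> D\<close> by blast
  qed
  then obtain w2 f where w2: "w1 = w2 @ [f]" by (cases w1 rule: rev_cases) auto
  have "f \<in> D" using nb w1 w2 nonbacktracking_in_D by simp
  have ef: "e = rv f" using backtrack w1 w2 by simp
  have "nb_walk (head e) w2 (head e)"
    using nb_walk_snocD[OF nb_walk_ConsD[OF w(1)[unfolded w1 w2]]] ef \<open>f \<in> D\<close> by simp
  moreover have "w2 \<noteq> []"
  proof
    assume "w2 = []"
    then have "nb_step e f" using nb w1 w2 by (simp add: nonbacktracking_Cons)
    then show False using ef \<open>f \<in> D\<close> by (simp add: nb_step_def)
  qed
  ultimately show thesis by (rule that) (simp add: w1 w2)
qed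

lemma girth_le_closed_nb_walk: "nb_walk a w a \<Longrightarrow> w \<noteq> [] \<Longrightarrow> girth \<le> length w"
proof (induction "length w" arbitrary: a w rule: less_induct)
  case less
  show ?case
  proof (cases "geodesic w")
    case True
    then show ?thesis by (rule girth_le_length)
  next
    case False
    with less.prems obtain b w' where "nb_walk b w' b" "w' \<noteq> []" "length w = length w' + 2"
      by (rule closed_nb_walk_backtracks)
    then show ?thesis using less.hyps[of w' b] by simp
  qed
qed

lemma closed_nb_walk_geodesic:
  assumes "nb_walk a w a" and "w \<noteq> []" and "length w \<le> girth"
  shows "geodesic w"
proof (rule ccontr)
  assume "\<not> geodesic w"
  with assms(1,2) obtain b w' where "nb_walk b w' b" "w' \<noteq> []" "length w = length w' + 2"
    by (rule closed_nb_walk_backtracks)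
  then show False using girth_le_closed_nb_walk assms(3) by fastforce
qed

text \<open>Two distinct non-backtracking walks with common ends close up to a closed walk, which is
  non-backtracking once their common final segment is cut off.\<close>
lemma nb_walks_eq:
  assumes "nb_walk a p b" and "nb_walk a q b" and "length p + length q < girth"
  shows "p = q"
  using assms
proof (induction p arbitrary: q b rule: rev_induct)
  have different_last: "p = q"
    if "nb_walk a p b" "nb_walk a q b" "length p + length q < girth"
      "p = [] \<or> q = [] \<or> last p \<noteq> last q" for p q b
  proof (rule ccontr)
    assume "p \<noteq> q"
    then have "p @ reverse_walk q \<noteq> []" by auto
    then have "girth \<le> length (p @ reverse_walk q)"
      using girth_le_closed_nb_walk nb_walk_append_reverse_walk that(1,2,4) by blast
    then show False using that(3) by simp
  qed
  {
    case Nil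
    then show ?case using different_last by blast
  next
    case (snoc e p)
    show ?case
    proof (cases q rule: rev_exhaust)
      case (snoc q' f)
      show ?thesis
      proof (cases "e = f")
        case True
        then have "p = q'"
          using snoc.IH[OF nb_walk_snocD nb_walk_snocD] snoc.prems \<open>q = q' @ [f]\<close> by auto
        then show ?thesis using True \<open>q = q' @ [f]\<close> by simp
      next
        case False
        then show ?thesis using different_last[OF snoc.prems] \<open>q = q' @ [f]\<close> by simp
      qed
    qed (use different_last snoc.prems in blast)
  }
qed

lemma nb_walks_join_geodesic:
  assumes p: "nb_walk a p b" and q: "nb_walk a q b" and "p \<noteq> q"
    and short: "length p + length q \<le> girth"
  shows "geodesic (p @ reverse_walk q)"
proof (rule closed_nb_walk_geodesic)
  show "nb_walk a (p @ reverse_walk q) a"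
  proof (rule nb_walk_append_reverse_walk[OF p q])
    show "p = [] \<or> q = [] \<or> last p \<noteq> last q"
    proof (rule ccontr)
      assume "\<not> ?thesis"
      then obtain p' q' e where "p = p' @ [e]" "q = q' @ [e]"
        by (metis append_butlast_last_id)
      moreover from this have "p' = q'"
        using nb_walks_eq[OF nb_walk_snocD nb_walk_snocD] p q short by simp
      ultimately show False using \<open>p \<noteq> q\<close> by simp
    qed
  qed
  show "p @ reverse_walk q \<noteq> []" using \<open>p \<noteq> q\<close> by auto
  show "length (p @ reverse_walk q) \<le> girth" using short by simp
qed

lemma geodesic_rotate1: "geodesic w \<Longrightarrow> geodesic (rotate1 w)"
  by (cases w rule: list.exhaust; cases "tl w = []")
     (auto simp: closed_geodesic_iff nonbacktracking_append nonbacktracking_Cons)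

lemma geodesic_rotate: "geodesic w \<Longrightarrow> geodesic (rotate k w)"
  by (induction k) (simp_all add: geodesic_rotate1)

lemma geodesic_split_nb_walk:
  assumes "geodesic (p @ q)" and "p \<noteq> []" and "q \<noteq> []"
  shows "nb_walk (head (last p)) q (tail (hd p))"
  using assms by (auto simp: closed_geodesic_iff nonbacktracking_append nb_walk_nonempty nb_step_def)

text \<open>A nontrivial rotation fixing a shortest geodesic would make a proper prefix of it a
  closed non-backtracking walk.\<close>
lemma shortest_geodesic_rotate_neq:
  assumes w: "geodesic w" "length w = girth" and k: "0 < k" "k < length w"
  shows "rotate k w \<noteq> w"
proof
  assume fixed: "rotate k w = w"
  have rot: "rotate k w = drop k w @ take k w"
    using k by (simp add: rotate_drop_take)
  have nonempty: "take k w \<noteq> []" "drop k w \<noteq> []" using k by auto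
  have "hd (drop k w) = hd w"
    using fixed nonempty by (metis hd_append2 rot)
  moreover have "nonbacktracking (take k w)" "nb_step (last (take k w)) (hd (drop k w))"
    using w(1) nonempty nonbacktracking_append[of "take k w" "drop k w"]
    by (auto simp: closed_geodesic_iff)
  ultimately have "nb_walk (tail (hd w)) (take k w) (tail (hd w))"
    using nonempty k by (simp add: nb_walk_nonempty nb_step_def hd_take)
  then have "girth \<le> k" using girth_le_closed_nb_walk nonempty k by fastforce
  then show False using w k by simp
qed

end

section \<open>Shortest geodesics\<close>

context multigraph
begin

definition shortest_geodesics :: "'e list set" where
  "shortest_geodesics = {w. geodesic w \<and> length w = girth}"

lemma finite_shortest_geodesics: "finite shortest_geodesics"
  by (rule finite_subset[OF _ finite_lists_length_eq[OF finite_D, of girth]])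
     (auto simp: shortest_geodesics_def closed_geodesic_def)

lemma cyc_class_eq_range: "w \<noteq> [] \<Longrightarrow> cyc_class w = range (\<lambda>k. rotate k w)"
  unfolding cyc_class_def by (auto intro!: exI[of _ "_ mod length w"] simp: rotate_conv_mod[symmetric])

lemma cyc_class_rotate:
  assumes "w \<noteq> []"
  shows "cyc_class (rotate i w) = cyc_class w"
proof -
  have "rotate k w = rotate ((k + length w * i - i) + i) w" for k
  proof -
    have "i \<le> length w * i" using assms by (cases w) auto
    then have "(k + length w * i - i) + i = k + length w * i" by linarith
    then show ?thesis by (metis rotate_conv_mod mod_mult_self2)
  qed
  then have "range (\<lambda>k. rotate k w) = range (\<lambda>k. rotate (k + i) w)"
    by (auto simp: image_iff)
  then show ?thesis
    using assms by (simp add: cyc_class_eq_range rotate_rotate)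
qed

lemma card_cyc_class_shortest_geodesic:
  assumes "w \<in> shortest_geodesics"
  shows "card (cyc_class w) = girth"
proof -
  have w: "geodesic w" "length w = girth" using assms by (simp_all add: shortest_geodesics_def)
  have "rotate i w \<noteq> rotate j w" if "i < j" "j < girth" for i j
  proof
    assume eq: "rotate i w = rotate j w"
    have "rotate (j - i) (rotate i w) = rotate j w"
      using that by (simp add: rotate_rotate)
    also have "\<dots> = rotate i w" using eq by simp
    finally show False
      using shortest_geodesic_rotate_neq[OF geodesic_rotate[OF w(1)]] w that by simp
  qed
  then have "inj_on (\<lambda>k. rotate k w) {..<girth}"
    by (intro inj_onI) (metis lessThan_iff linorder_neqE_nat)
  moreover have "cyc_class w = (\<lambda>k. rotate k w) ` {..<girth}"
    using w by (auto simp: cyc_class_def)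
  ultimately show ?thesis by (simp add: card_image)
qed

lemma card_shortest_geodesics: "card shortest_geodesics = girth * kiss"
proof -
  let ?C = "cyc_class ` shortest_geodesics"
  have nonempty: "w \<noteq> []" if "w \<in> shortest_geodesics" for w
    using that by (simp add: shortest_geodesics_def closed_geodesic_def)
  have "cyc_class w \<subseteq> shortest_geodesics" if "w \<in> shortest_geodesics" for w
    using that geodesic_rotate by (auto simp: cyc_class_def shortest_geodesics_def)
  moreover have "w \<in> cyc_class w" if "w \<in> shortest_geodesics" for w
    using nonempty[OF that] by (auto simp: cyc_class_eq_range intro: range_eqI[of _ _ 0])
  ultimately have union: "\<Union>?C = shortest_geodesics" by blast
  have same_class: "cyc_class v = cyc_class w"
    if w: "w \<in> shortest_geodesics" and v: "v \<in> cyc_class w" for v w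
  proof -
    obtain i where "v = rotate i w" using v by (auto simp: cyc_class_def)
    then show ?thesis using cyc_class_rotate nonempty[OF w] by simp
  qed
  have "c1 \<inter> c2 = {}" if "c1 \<in> ?C" "c2 \<in> ?C" "c1 \<noteq> c2" for c1 c2
    using that same_class by blast
  then have "girth * card ?C = card (\<Union>?C)"
    using card_partition[of ?C girth] finite_shortest_geodesics card_cyc_class_shortest_geodesic union
    by auto
  then show ?thesis using union by (simp add: kiss_mg_def shortest_geodesics_def)
qed

text \<open>A shortest geodesic is determined by its first \<open>girth div 2 + 1\<close> darts: the two
  remaining arcs are non-backtracking walks with common ends of total length \<open>< girth\<close>.\<close>
lemma inj_on_take_shortest_geodesics:
  assumes "3 \<le> girth"
  shows "inj_on (take (Suc (girth div 2))) shortest_geodesics"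
proof (rule inj_onI)
  let ?k = "Suc (girth div 2)"
  fix x y assume x: "x \<in> shortest_geodesics" and y: "y \<in> shortest_geodesics"
    and prefix: "take ?k x = take ?k y"
  have len: "length x = girth" "length y = girth" "?k < girth"
    using x y assms by (auto simp: shortest_geodesics_def)
  then have "x \<noteq> []" "y \<noteq> []" by auto
  have "nb_walk (head (last (take ?k x))) (drop ?k x) (tail (hd (take ?k x)))"
    using geodesic_split_nb_walk[of "take ?k x" "drop ?k x"] x len \<open>x \<noteq> []\<close>
    by (simp add: shortest_geodesics_def)
  moreover have "nb_walk (head (last (take ?k x))) (drop ?k y) (tail (hd (take ?k x)))"
    using geodesic_split_nb_walk[of "take ?k y" "drop ?k y"] y len prefix \<open>y \<noteq> []\<close>
    by (simp add: shortest_geodesics_def)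
  moreover have "length (drop ?k x) + length (drop ?k y) < girth" using len by simp
  ultimately have "drop ?k x = drop ?k y" by (rule nb_walks_eq)
  then show "x = y" using prefix by (metis append_take_drop_id)
qed

end

section \<open>Balls of non-backtracking walks\<close>

context multigraph
begin

text \<open>Below half the girth, distinct walks in either set have distinct endpoints; counting them
  gives the Moore bound for odd resp. even girth.\<close>
definition nb_ball :: "'v \<Rightarrow> nat \<Rightarrow> 'e list set" where
  "nb_ball v r = {w. nonbacktracking w \<and> length w \<le> r \<and> (w \<noteq> [] \<longrightarrow> tail (hd w) = v)}"

definition nb_edge_ball :: "'e \<Rightarrow> nat \<Rightarrow> 'e list set" where
  "nb_edge_ball e r = {w. nonbacktracking w \<and> w \<noteq> [] \<and> length w \<le> r \<and> hd w \<in> {e, rv e}}"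

lemma nb_walk_endpoint_nb_ball: "w \<in> nb_ball v r \<Longrightarrow> nb_walk v w (endpoint v w)"
  by (simp add: nb_ball_def nb_walk_def)

lemma inj_on_endpoint_nb_ball:
  assumes "2 * r < girth"
  shows "inj_on (endpoint v) (nb_ball v r)"
proof (rule inj_onI)
  fix x y assume x: "x \<in> nb_ball v r" and y: "y \<in> nb_ball v r" and "endpoint v x = endpoint v y"
  then have "nb_walk v x (endpoint v x)" "nb_walk v y (endpoint v x)"
    using nb_walk_endpoint_nb_ball by metis+
  moreover have "length x + length y < girth" using x y assms by (simp add: nb_ball_def)
  ultimately show "x = y" by (rule nb_walks_eq)
qed

lemma endpoint_nb_ball_subset: "v \<in> V \<Longrightarrow> endpoint v ` nb_ball v r \<subseteq> V"
  by (auto simp: nb_ball_def endpoint_def nonbacktracking_in_D head_in_V)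

lemma nb_walk_nb_edge_ball: "x \<in> nb_edge_ball e r \<Longrightarrow> nb_walk (tail (hd x)) x (head (last x))"
  by (simp add: nb_edge_ball_def nb_walk_nonempty)

lemma nb_edge_ball_eq_if_same_start:
  assumes "2 * r \<le> girth" and x: "x \<in> nb_edge_ball e r" and y: "y \<in> nb_edge_ball e r"
    and start: "hd x = hd y" and ends: "head (last x) = head (last y)"
  shows "x = y"
proof -
  have "x \<noteq> []" "y \<noteq> []" "length x \<le> r" "length y \<le> r"
    using x y by (simp_all add: nb_edge_ball_def)
  then have "length (tl x) + length (tl y) < girth"
    using assms(1) by (simp only: length_tl length_greater_0_conv[symmetric])
  moreover have "nb_walk (head (hd x)) (tl x) (head (last x))"
    and "nb_walk (head (hd x)) (tl y) (head (last x))"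
    using nb_walk_tl[OF nb_walk_nb_edge_ball[OF x]] nb_walk_tl[OF nb_walk_nb_edge_ball[OF y]]
      \<open>x \<noteq> []\<close> \<open>y \<noteq> []\<close> start ends by simp_all
  ultimately have "tl x = tl y" using nb_walks_eq by blast
  then show ?thesis using start \<open>x \<noteq> []\<close> \<open>y \<noteq> []\<close> by (metis list.collapse)
qed

lemma nb_edge_ball_opposite_starts:
  assumes "2 * r \<le> girth" and x: "x \<in> nb_edge_ball e r" and y: "y \<in> nb_edge_ball e r"
    and opposite: "hd y = rv (hd x)" and ends: "head (last x) = head (last y)"
  shows False
proof -
  have x': "nonbacktracking x" "x \<noteq> []" "length x \<le> r"
    and y': "nonbacktracking y" "y \<noteq> []" "length y \<le> r"
    using x y by (simp_all add: nb_edge_ball_def)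
  have "hd x \<in> D" by (rule nonbacktracking_in_D[OF x'(1) hd_in_set[OF x'(2)]])
  have "length x + length (tl y) < girth"
    using x'(3) y'(2,3) assms(1) by (simp only: length_tl length_greater_0_conv[symmetric])
  moreover have "nb_walk (tail (hd x)) (tl y) (head (last x))"
    using nb_walk_tl[OF nb_walk_nb_edge_ball[OF y] y'(2)] opposite ends \<open>hd x \<in> D\<close> by simp
  ultimately have "x = tl y" using nb_walks_eq[OF nb_walk_nb_edge_ball[OF x]] by blast
  then have "y = rv (hd x) # hd x # tl x" using x'(2) y'(2) opposite by (metis list.collapse)
  then have "nb_step (rv (hd x)) (hd x)" using y'(1) by (simp add: nonbacktracking_Cons)
  then show False using \<open>hd x \<in> D\<close> by (simp add: nb_step_def)
qed

lemma inj_on_endpoint_nb_edge_ball: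
  assumes "2 * r \<le> girth" and "e \<in> D"
  shows "inj_on (\<lambda>w. head (last w)) (nb_edge_ball e r)"
proof (rule inj_onI)
  fix x y assume x: "x \<in> nb_edge_ball e r" and y: "y \<in> nb_edge_ball e r"
    and ends: "head (last x) = head (last y)"
  then consider "hd x = hd y" | "hd y = rv (hd x)" | "hd x = rv (hd y)"
    using assms(2) by (auto simp: nb_edge_ball_def)
  then show "x = y"
    using nb_edge_ball_eq_if_same_start[OF assms(1) x y _ ends]
      nb_edge_ball_opposite_starts[OF assms(1) x y _ ends]
      nb_edge_ball_opposite_starts[OF assms(1) y x _ ends[symmetric]]
    by cases blast+
qed

lemma last_nb_edge_ball_subset: "(\<lambda>w. head (last w)) ` nb_edge_ball e r \<subseteq> V"
  by (auto simp: nb_edge_ball_def nonbacktracking_in_D head_in_V)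

end

section \<open>Counting walks and the Moore bound\<close>

lemma geometric_sum_nat: "c * (\<Sum>i<r. (c + 1) ^ i) + 1 = (c + 1) ^ r" for c :: nat
  by (induction r) (simp_all add: algebra_simps)

lemma moore_number_odd:
  assumes "odd g" and "3 \<le> g"
  shows "moore_number d g = 1 + d * (\<Sum>i<g div 2. (d - 1) ^ i)"
proof -
  obtain k where k: "g = 2 * k + 1" using assms(1) by (rule oddE)
  then obtain r where "k = Suc r" using assms(2) by (cases k) auto
  then show ?thesis using k by (simp add: moore_number_def lessThan_Suc_atMost)
qed

lemma moore_number_even:
  assumes "even g" and "2 \<le> g"
  shows "moore_number d g = 2 * (\<Sum>i<g div 2. (d - 1) ^ i)"
proof -
  obtain k where k: "g = 2 * k" using assms(1) by (rule evenE)
  then obtain r where "k = Suc r" using assms(2) by (cases k) auto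
  then show ?thesis using k by (simp add: moore_number_def lessThan_Suc_atMost)
qed

lemma moore_number_identity:
  assumes "2 \<le> d" and "3 \<le> g"
  shows "(d - 2) * moore_number d g + 2 = (if odd g then d else 2) * (d - 1) ^ (g div 2)"
proof -
  obtain c where c: "d = c + 2" using assms(1) by (metis add.commute le_Suc_ex)
  show ?thesis
    using geometric_sum_nat[of c "g div 2", symmetric] assms(2)
    by (cases "odd g") (simp_all add: moore_number_odd moore_number_even c algebra_simps)
qed

locale regular_multigraph = multigraph +
  fixes d :: nat
  assumes regular: "regular_mg V D tail d"
begin

lemma card_darts_from: "v \<in> V \<Longrightarrow> card {e \<in> D. tail e = v} = d"
  using regular by (simp add: regular_mg_def)

lemma card_D: "card D = card V * d"
proof -
  have "card D = card (\<Union>v\<in>V. {e \<in> D. tail e = v})"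
    using tail_in_V by (intro arg_cong[where f = card]) auto
  also have "\<dots> = (\<Sum>v\<in>V. card {e \<in> D. tail e = v})"
    using finite_V finite_D by (intro card_UN_disjoint) auto
  also have "\<dots> = card V * d" by (simp add: card_darts_from)
  finally show ?thesis .
qed

lemma card_nb_successors: "e \<in> D \<Longrightarrow> card {f \<in> D. nb_step e f} = d - 1"
proof -
  assume e: "e \<in> D"
  have "{f \<in> D. nb_step e f} = {f \<in> D. tail f = head e} - {rv e}"
    by (auto simp: nb_step_def)
  moreover have "rv e \<in> {f \<in> D. tail f = head e}" using e rv_in_D by simp
  ultimately show ?thesis
    using card_darts_from[OF head_in_V[OF e]] finite_D by (simp add: card_Diff_singleton)
qed

lemma finite_nonbacktracking_le: "finite {w. nonbacktracking w \<and> length w \<le> L}"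
  by (rule finite_subset[OF _ finite_lists_length_le[OF finite_D]])
     (auto simp: nonbacktracking_def)

lemma finite_nb_continuations [simp]:
  "finite {w. nonbacktracking (e # w) \<and> length w = L}"
  "finite {w. nonbacktracking (e # w) \<and> length w < L}"
  by (rule finite_subset[OF _ finite_nonbacktracking_le[of L]], auto simp: nonbacktracking_Cons)+

lemma card_nb_continuations:
  "e \<in> D \<Longrightarrow> card {w. nonbacktracking (e # w) \<and> length w = L} = (d - 1) ^ L"
proof (induction L arbitrary: e)
  case 0
  then have "{w. nonbacktracking (e # w) \<and> length w = 0} = {[]}"
    by (auto simp: nonbacktracking_Cons)
  then show ?case by simp
next
  case (Suc L)
  have "{w. nonbacktracking (e # w) \<and> length w = Suc L} =
      (\<Union>f\<in>{f \<in> D. nb_step e f}. Cons f ` {w. nonbacktracking (f # w) \<and> length w = L})"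
    using Suc.prems by (intro eq_UN_Cons) (auto simp: nonbacktracking_Cons)
  also have "card \<dots> = (\<Sum>f\<in>{f \<in> D. nb_step e f}. card {w. nonbacktracking (f # w) \<and> length w = L})"
    using finite_D by (intro card_UN_Cons) auto
  also have "\<dots> = (\<Sum>f\<in>{f \<in> D. nb_step e f}. (d - 1) ^ L)"
    by (intro sum.cong) (auto simp: Suc.IH)
  finally show ?case using card_nb_successors[OF Suc.prems] by simp
qed

lemma card_nb_continuations_less:
  assumes "e \<in> D"
  shows "card {w. nonbacktracking (e # w) \<and> length w < r} = (\<Sum>i<r. (d - 1) ^ i)"
proof -
  have "{w. nonbacktracking (e # w) \<and> length w < r} =
      (\<Union>i<r. {w. nonbacktracking (e # w) \<and> length w = i})"
    by auto
  also have "card \<dots> = (\<Sum>i<r. card {w. nonbacktracking (e # w) \<and> length w = i})"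
    by (intro card_UN_disjoint) auto
  finally show ?thesis using assms by (simp add: card_nb_continuations)
qed

lemma card_nonbacktracking_length_Suc:
  "card {w. nonbacktracking w \<and> length w = Suc L} = card V * d * (d - 1) ^ L"
proof -
  have "{w. nonbacktracking w \<and> length w = Suc L} =
      (\<Union>e\<in>D. Cons e ` {w. nonbacktracking (e # w) \<and> length w = L})"
    by (intro eq_UN_Cons) (auto simp: nonbacktracking_Cons)
  also have "card \<dots> = (\<Sum>e\<in>D. card {w. nonbacktracking (e # w) \<and> length w = L})"
    using finite_D by (intro card_UN_Cons) auto
  also have "\<dots> = (\<Sum>e\<in>D. (d - 1) ^ L)"
    by (intro sum.cong) (auto simp: card_nb_continuations)
  finally show ?thesis by (simp add: card_D)
qed

lemma card_nb_ball: "v \<in> V \<Longrightarrow> card (nb_ball v r) = 1 + d * (\<Sum>i<r. (d - 1) ^ i)"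
proof -
  assume v: "v \<in> V"
  let ?E = "{e \<in> D. tail e = v}"
  let ?U = "\<Union>e\<in>?E. Cons e ` {w. nonbacktracking (e # w) \<and> length w < r}"
  have "card ?U = (\<Sum>e\<in>?E. card {w. nonbacktracking (e # w) \<and> length w < r})"
    using finite_D by (intro card_UN_Cons) auto
  also have "\<dots> = d * (\<Sum>i<r. (d - 1) ^ i)"
    using card_darts_from[OF v] by (simp add: card_nb_continuations_less)
  finally have card_U: "card ?U = d * (\<Sum>i<r. (d - 1) ^ i)" .
  have "nb_ball v r - {[]} = ?U"
    by (intro eq_UN_Cons) (auto simp: nb_ball_def nonbacktracking_Cons)
  moreover have "[] \<in> nb_ball v r" by (simp add: nb_ball_def)
  ultimately have "nb_ball v r = insert [] ?U" by blast
  moreover have "finite ?U" "[] \<notin> ?U" using finite_D by auto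
  ultimately show ?thesis using card_U by simp
qed

lemma card_nb_edge_ball: "e \<in> D \<Longrightarrow> card (nb_edge_ball e r) = 2 * (\<Sum>i<r. (d - 1) ^ i)"
proof -
  assume e: "e \<in> D"
  have "nb_edge_ball e r =
      (\<Union>f\<in>{e, rv e}. Cons f ` {w. nonbacktracking (f # w) \<and> length w < r})"
    by (intro eq_UN_Cons) (auto simp: nb_edge_ball_def nonbacktracking_Cons)
  also have "card \<dots> = (\<Sum>f\<in>{e, rv e}. card {w. nonbacktracking (f # w) \<and> length w < r})"
    by (intro card_UN_Cons) auto
  also have "\<dots> = (\<Sum>f\<in>{e, rv e}. \<Sum>i<r. (d - 1) ^ i)"
    using e rv_in_D by (intro sum.cong) (auto simp: card_nb_continuations_less)
  finally have "card (nb_edge_ball e r) = (\<Sum>f\<in>{e, rv e}. \<Sum>i<r. (d - 1) ^ i)" .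
  moreover have "e \<noteq> rv e" using rv_neq[OF e] by metis
  ultimately show ?thesis by simp
qed

lemma moore_bound_odd:
  assumes "v \<in> V" and "2 * r < girth"
  shows "1 + d * (\<Sum>i<r. (d - 1) ^ i) \<le> card V"
  using card_inj_on_le[OF inj_on_endpoint_nb_ball[OF assms(2)] endpoint_nb_ball_subset[OF assms(1)]
      finite_V] card_nb_ball[OF assms(1)] by simp

lemma moore_bound_even:
  assumes "e \<in> D" and "2 * r \<le> girth"
  shows "2 * (\<Sum>i<r. (d - 1) ^ i) \<le> card V"
  using card_inj_on_le[OF inj_on_endpoint_nb_edge_ball[OF assms(2,1)] last_nb_edge_ball_subset
      finite_V] card_nb_edge_ball[OF assms(1)] by simp

text \<open>In the equality case of the odd Moore bound, closing any non-backtracking walk of length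
  \<open>r + 1\<close> by the unique short walk back to its start yields a shortest geodesic.\<close>
lemma prefix_shortest_geodesic_odd:
  assumes g: "girth = 2 * r + 1" and moore: "card V = 1 + d * (\<Sum>i<r. (d - 1) ^ i)"
    and w: "nonbacktracking w" "length w = Suc r"
  shows "w \<in> take (Suc r) ` shortest_geodesics"
proof -
  have "w \<noteq> []" using w by auto
  let ?v = "tail (hd w)" and ?u = "head (last w)"
  have "?v \<in> V" "?u \<in> V"
    using w \<open>w \<noteq> []\<close> nonbacktracking_in_D tail_in_V head_in_V by simp_all
  have walk_w: "nb_walk ?v w ?u" using w \<open>w \<noteq> []\<close> by (simp add: nb_walk_nonempty)
  have "endpoint ?v ` nb_ball ?v r = V"
    using image_eq_if_inj_on_card_eq[OF inj_on_endpoint_nb_ball endpoint_nb_ball_subset finite_V]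
      card_nb_ball moore g \<open>?v \<in> V\<close> by simp
  then obtain p where p: "p \<in> nb_ball ?v r" "endpoint ?v p = ?u"
    using \<open>?u \<in> V\<close> by (metis imageE)
  then have walk_p: "nb_walk ?v p ?u" using nb_walk_endpoint_nb_ball by metis
  have "length p \<le> r" using p by (simp add: nb_ball_def)
  then have "w \<noteq> p" using w by auto
  then have geodesic: "geodesic (w @ reverse_walk p)"
    using nb_walks_join_geodesic[OF walk_w walk_p] g w \<open>length p \<le> r\<close> by simp
  then have "w @ reverse_walk p \<in> shortest_geodesics"
    using girth_le_length[OF geodesic] g w \<open>length p \<le> r\<close> by (simp add: shortest_geodesics_def)
  moreover have "take (Suc r) (w @ reverse_walk p) = w" using w by simp
  ultimately show ?thesis by (metis image_eqI)
qed

lemma prefix_shortest_geodesic_even: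
  assumes g: "girth = 2 * r" and moore: "card V = 2 * (\<Sum>i<r. (d - 1) ^ i)"
    and w: "nonbacktracking w" "length w = Suc r"
  shows "w \<in> take (Suc r) ` shortest_geodesics"
proof -
  have "w \<noteq> []" using w by auto
  let ?v = "tail (hd w)" and ?f = "last w"
  have "?f \<in> D" "?v \<in> V"
    using w \<open>w \<noteq> []\<close> nonbacktracking_in_D tail_in_V by simp_all
  have walk_w: "nb_walk ?v w (head ?f)" using w \<open>w \<noteq> []\<close> by (simp add: nb_walk_nonempty)
  have "(\<lambda>x. head (last x)) ` nb_edge_ball ?f r = V"
    using image_eq_if_inj_on_card_eq[OF inj_on_endpoint_nb_edge_ball last_nb_edge_ball_subset finite_V]
      card_nb_edge_ball moore g \<open>?f \<in> D\<close> by simp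
  then obtain x where x: "x \<in> nb_edge_ball ?f r" "head (last x) = ?v"
    using \<open>?v \<in> V\<close> by (metis imageE)
  then have x': "nonbacktracking x" "x \<noteq> []" "length x \<le> r" "hd x \<in> {?f, rv ?f}"
    by (simp_all add: nb_edge_ball_def)
  have walk_x: "nb_walk (tail (hd x)) x ?v" using nb_walk_nb_edge_ball[OF x(1)] x(2) by simp
  from x' consider (forward) "hd x = ?f" | (backward) "hd x = rv ?f" by auto
  then show ?thesis
  proof cases
    case backward
    have walk_tl: "nb_walk (tail ?f) (tl x) ?v"
      using nb_walk_tl[OF walk_x x'(2)] backward \<open>?f \<in> D\<close> by simp
    have walk_back: "nb_walk (tail ?f) (reverse_walk (butlast w)) ?v"
      using nb_walk_reverse_walk[OF nb_walk_snocD] walk_w \<open>w \<noteq> []\<close> by simp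
    have lengths: "length (tl x) < r" "length (reverse_walk (butlast w)) = r"
      using x'(2,3) w(2) by (simp_all add: Suc_le_eq flip: length_greater_0_conv)
    have "tl x = reverse_walk (butlast w)"
      using walk_tl walk_back by (rule nb_walks_eq) (use lengths g in simp)
    then show ?thesis using lengths by simp
  next
    case forward
    have walk_tl: "nb_walk (head ?f) (tl x) ?v"
      using nb_walk_tl[OF walk_x x'(2)] forward by simp
    have "tl x = [] \<or> hd (tl x) \<noteq> rv ?f"
      using x'(1,2) forward by (cases x) (auto simp: nonbacktracking_Cons nb_step_def)
    then have "nb_walk ?v (w @ tl x) ?v"
      using nb_walk_append[OF walk_w walk_tl] by blast
    then have geodesic: "geodesic (w @ tl x)"
      using x' w g by (intro closed_nb_walk_geodesic) auto
    then have "w @ tl x \<in> shortest_geodesics"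
      using girth_le_length[OF geodesic] g w x' by (simp add: shortest_geodesics_def)
    moreover have "take (Suc r) (w @ tl x) = w" using w by simp
    ultimately show ?thesis by (metis image_eqI)
  qed
qed

lemma take_shortest_geodesics_subset:
  "k \<le> girth \<Longrightarrow> take k ` shortest_geodesics \<subseteq> {w. nonbacktracking w \<and> length w = k}"
  by (auto simp: shortest_geodesics_def closed_geodesic_iff nonbacktracking_take)


lemma girth_mult_kiss_le:
  assumes "3 \<le> girth"
  shows "girth * kiss \<le> card V * d * (d - 1) ^ (girth div 2)"
proof -
  let ?k = "Suc (girth div 2)"
  have "finite {w. nonbacktracking w \<and> length w = ?k}"
    by (rule finite_subset[OF _ finite_nonbacktracking_le[of ?k]]) auto
  moreover have "take ?k ` shortest_geodesics \<subseteq> {w. nonbacktracking w \<and> length w = ?k}"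
    using assms by (intro take_shortest_geodesics_subset) simp
  ultimately have "card (take ?k ` shortest_geodesics) \<le> card {w. nonbacktracking w \<and> length w = ?k}"
    by (rule card_mono)
  moreover have "card (take ?k ` shortest_geodesics) = girth * kiss"
    using card_image[OF inj_on_take_shortest_geodesics[OF assms]] card_shortest_geodesics by simp
  ultimately show ?thesis by (simp add: card_nonbacktracking_length_Suc)
qed

lemma girth_mult_kiss_eq:
  assumes "3 \<le> girth"
    and prefixes: "{w. nonbacktracking w \<and> length w = Suc (girth div 2)}
      \<subseteq> take (Suc (girth div 2)) ` shortest_geodesics"
  shows "girth * kiss = card V * d * (d - 1) ^ (girth div 2)"
proof -
  let ?k = "Suc (girth div 2)"
  have "take ?k ` shortest_geodesics \<subseteq> {w. nonbacktracking w \<and> length w = ?k}"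
    using assms(1) by (intro take_shortest_geodesics_subset) simp
  then have "take ?k ` shortest_geodesics = {w. nonbacktracking w \<and> length w = ?k}"
    using prefixes by (rule subset_antisym)
  then have "girth * kiss = card {w. nonbacktracking w \<and> length w = ?k}"
    using card_image[OF inj_on_take_shortest_geodesics[OF assms(1)]] card_shortest_geodesics
    by simp
  then show ?thesis by (simp add: card_nonbacktracking_length_Suc)
qed

lemma moore_number_le_card_V:
  assumes "3 \<le> girth" and "V \<noteq> {}" and "0 < d"
  shows "moore_number d girth \<le> card V"
proof (cases "odd girth")
  case True
  obtain v where "v \<in> V" using assms(2) by blast
  then show ?thesis
    using moore_bound_odd[of v "girth div 2"] moore_number_odd[OF True assms(1)] True assms(1)
    by simp
next
  case False
  obtain v where v: "v \<in> V" using assms(2) by blast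
  then have "{e \<in> D. tail e = v} \<noteq> {}"
    using card_darts_from[OF v] assms(3) by (metis card.empty less_irrefl)
  then obtain e where "e \<in> D" by blast
  then show ?thesis
    using moore_bound_even[of e "girth div 2"] moore_number_even[OF _ , of girth d] False assms(1)
    by simp
qed

lemma girth_mult_kiss_eq_if_moore:
  assumes "3 \<le> girth" and moore: "card V = moore_number d girth"
  shows "girth * kiss = card V * d * (d - 1) ^ (girth div 2)"
proof (rule girth_mult_kiss_eq[OF assms(1)], intro subsetI, clarify)
  fix w assume w: "nonbacktracking w" "length w = Suc (girth div 2)"
  show "w \<in> take (Suc (girth div 2)) ` shortest_geodesics"
  proof (cases "odd girth")
    case True
    then have "girth = 2 * (girth div 2) + 1" by simp
    moreover have "card V = 1 + d * (\<Sum>i<girth div 2. (d - 1) ^ i)"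
      using moore moore_number_odd[OF True assms(1)] by simp
    ultimately show ?thesis using w by (rule prefix_shortest_geodesic_odd)
  next
    case False
    then have "girth = 2 * (girth div 2)" by simp
    moreover have "card V = 2 * (\<Sum>i<girth div 2. (d - 1) ^ i)"
      using moore moore_number_even[of girth d] False assms(1) by simp
    ultimately show ?thesis using w by (rule prefix_shortest_geodesic_even)
  qed
qed

lemma moore_graph_iff:
  assumes "connected_mg V D rv tail"
  shows "moore_graph V D rv tail \<longleftrightarrow> card V = moore_number d girth"
proof
  assume "moore_graph V D rv tail"
  then obtain d' where d': "regular_mg V D tail d'" "card V = moore_number d' girth"
    by (auto simp: moore_graph_def)
  obtain v where "v \<in> V" using assms by (auto simp: connected_mg_def)
  then have "d' = d" using d'(1) regular unfolding regular_mg_def by metis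
  then show "card V = moore_number d girth" using d'(2) by simp
next
  assume "card V = moore_number d girth"
  then show "moore_graph V D rv tail"
    using assms regular by (auto simp: moore_graph_def)
qed

end

section \<open>The analytic bound\<close>

lemma divide_log_add_strict_mono:
  fixes b c a x :: real
  assumes b: "1 < b" and a: "0 < a" and ax: "a < x" and large: "1 \<le> ln a + c * ln b"
  shows "a / (log b a + c) < x / (log b x + c)"
proof -
  have lnb: "0 < ln b" using b by simp
  have inv_le: "1 / ln b \<le> log b a + c"
    using large lnb by (simp add: log_def field_simps)
  have pos_a: "0 < log b a + c"
    using inv_le lnb by (meson divide_pos_pos less_le_trans zero_less_one)
  have "log b a < log b x" using a ax b by simp
  then have pos_x: "0 < log b x + c" using pos_a by linarith
  have "log b x - log b a = (ln x - ln a) / ln b" by (simp add: log_def diff_divide_distrib)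
  also have "\<dots> < ((x - a) / a) / ln b"
    using ln_diff_less[of x a] a ax lnb by (intro divide_strict_right_mono) auto
  finally have "a * (log b x - log b a) < a * (((x - a) / a) / ln b)"
    using a by (rule mult_strict_left_mono)
  also have "\<dots> = (x - a) * (1 / ln b)" using a by simp
  also have "\<dots> \<le> (x - a) * (log b a + c)"
    using inv_le ax by (intro mult_left_mono) auto
  finally have "a * (log b x + c) < x * (log b a + c)" by (simp add: algebra_simps)
  then show ?thesis using pos_a pos_x by (simp add: field_simps)
qed

lemma divide_log_add_bound:
  fixes b c x N K :: real and r :: nat
  assumes b: "1 < b" and large: "1 \<le> (r + c) * ln b" and x: "b ^ r \<le> x" and N: "0 < N"
    and K: "2 * (r + c) * K \<le> N * b ^ r"
  shows "K \<le> N / 2 * (x / (log b x + c))"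
    and "K = N / 2 * (x / (log b x + c)) \<longleftrightarrow> 2 * (r + c) * K = N * b ^ r \<and> x = b ^ r"
proof -
  have "0 < (r + c) * ln b" using large by linarith
  then have rc: "0 < r + c" using b by (simp add: zero_less_mult_iff)
  have at_x0: "N / 2 * (b ^ r / (log b (b ^ r) + c)) = N * b ^ r / (2 * (r + c))"
    using b by (simp add: log_nat_power)
  have K_le: "K \<le> N / 2 * (b ^ r / (log b (b ^ r) + c))"
    using K rc unfolding at_x0 by (simp add: pos_le_divide_eq mult.commute)
  have K_eq: "K = N / 2 * (b ^ r / (log b (b ^ r) + c)) \<longleftrightarrow> 2 * (r + c) * K = N * b ^ r"
    using rc unfolding at_x0 by (auto simp: eq_divide_eq mult.commute)
  have "K \<le> N / 2 * (x / (log b x + c)) \<and>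
      (K = N / 2 * (x / (log b x + c)) \<longleftrightarrow> 2 * (r + c) * K = N * b ^ r \<and> x = b ^ r)"
  proof (cases "x = b ^ r")
    case False
    then have "b ^ r < x" using x by simp
    then have "b ^ r / (log b (b ^ r) + c) < x / (log b x + c)"
      using b large by (intro divide_log_add_strict_mono) (auto simp: ln_realpow algebra_simps)
    then have "N / 2 * (b ^ r / (log b (b ^ r) + c)) < N / 2 * (x / (log b x + c))"
      by (rule mult_strict_left_mono) (use N in simp)
    then show ?thesis using K_le False by auto
  qed (use K_le K_eq in auto)
  then show "K \<le> N / 2 * (x / (log b x + c))"
    and "K = N / 2 * (x / (log b x + c)) \<longleftrightarrow> 2 * (r + c) * K = N * b ^ r \<and> x = b ^ r"
    by blast+
qed

lemma real_eq_two_mult_half_add: "real g = 2 * (real (g div 2) + (if odd g then 1 / 2 else 0))"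
proof -
  have "g = 2 * (g div 2) + (if odd g then 1 else 0)" by simp
  then have "real g = real (2 * (g div 2) + (if odd g then 1 else 0))" by (rule arg_cong)
  then show ?thesis by (simp add: algebra_simps)
qed

text \<open>The parameters \<open>c\<close> and \<open>s\<close> absorb the parity of \<open>g\<close>: \<open>g = 2 (g div 2 + c)\<close>, and the
  Moore bound reads \<open>s (d - 1)^(g div 2) \<le> n (d - 2) + 2\<close>.\<close>
lemma kissing_bound_of_counts_uniform:
  fixes n d g k M :: nat and c s x :: real
  defines "c \<equiv> if odd g then 1 / 2 else 0" and "s \<equiv> if odd g then real d else 2"
    and "x \<equiv> (real n * (real d - 2) + 2) / s"
  assumes d: "3 \<le> d" and g: "3 \<le> g" and n: "0 < n"
    and kiss_le: "g * k \<le> n * d * (d - 1) ^ (g div 2)"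
    and moore_le: "M \<le> n"
    and moore_identity: "(d - 2) * M + 2 = (if odd g then d else 2) * (d - 1) ^ (g div 2)"
    and kiss_eq: "M = n \<Longrightarrow> g * k = n * d * (d - 1) ^ (g div 2)"
  shows "real k \<le> real n * real d / 2 * (x / (log (real d - 1) x + c))"
    and "real k = real n * real d / 2 * (x / (log (real d - 1) x + c)) \<longleftrightarrow> n = M"
proof -
  define r where "r = g div 2"
  define b where "b = real d - 1"
  have b: "1 < b" using d by (simp add: b_def)
  have g_eq: "real g = 2 * (r + c)"
    using real_eq_two_mult_half_add[of g] by (simp add: r_def c_def)
  have large: "1 \<le> (r + c) * ln b"
  proof -
    have "ln 2 \<le> ln b" using d by (simp add: b_def)
    then have "2 / 3 \<le> ln b" using ln2_ge_two_thirds by linarith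
    moreover have "3 / 2 \<le> r + c" using g_eq g by simp
    ultimately have "3 / 2 * (2 / 3) \<le> (r + c) * ln b" by (intro mult_mono) auto
    then show ?thesis by simp
  qed
  have power: "real ((d - 1) ^ r) = b ^ r" using d by (simp add: b_def of_nat_diff)
  have "real (g * k) \<le> real (n * d * (d - 1) ^ r)" using kiss_le by (simp only: r_def of_nat_le_iff)
  then have K: "2 * (r + c) * real k \<le> (real n * real d) * b ^ r" using g_eq power by simp
  have K_eq: "2 * (r + c) * real k = (real n * real d) * b ^ r" if "n = M"
  proof -
    have "real (g * k) = real (n * d * (d - 1) ^ r)" by (simp only: r_def kiss_eq[OF that[symmetric]])
    then show ?thesis using g_eq power by simp
  qed
  have "real ((d - 2) * M + 2) = real ((if odd g then d else 2) * (d - 1) ^ r)"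
    using moore_identity by (simp add: r_def)
  then have x0: "s * b ^ r = real M * (real d - 2) + 2"
    using power d by (simp add: s_def of_nat_diff algebra_simps)
  have s: "0 < s" using d by (simp add: s_def)
  have "real M * (real d - 2) \<le> real n * (real d - 2)" using moore_le d by (intro mult_right_mono) auto
  then have x0_le: "b ^ r \<le> x" using x0 s by (simp add: x_def field_simps)
  have "x = b ^ r \<longleftrightarrow> real n * (real d - 2) = real M * (real d - 2)"
    using x0 s by (auto simp: x_def field_simps)
  also have "\<dots> \<longleftrightarrow> n = M" using d by simp
  finally have x0_eq: "x = b ^ r \<longleftrightarrow> n = M" .
  have N: "0 < real n * real d" using n d by simp
  show "real k \<le> real n * real d / 2 * (x / (log (real d - 1) x + c))"
    and "real k = real n * real d / 2 * (x / (log (real d - 1) x + c)) \<longleftrightarrow> n = M"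
    using divide_log_add_bound[OF b large x0_le N K] K_eq x0_eq unfolding b_def by auto
qed

lemma kissing_bound_of_counts:
  fixes n d g k M :: nat and m :: real
  defines "m \<equiv> real n * (real d - 2) + 2"
  assumes counts: "3 \<le> d" "3 \<le> g" "0 < n" "g * k \<le> n * d * (d - 1) ^ (g div 2)" "M \<le> n"
    "(d - 2) * M + 2 = (if odd g then d else 2) * (d - 1) ^ (g div 2)"
    "M = n \<Longrightarrow> g * k = n * d * (d - 1) ^ (g div 2)"
  shows "odd g \<Longrightarrow> real k \<le> n * m / (2 * log (real d - 1) (m / d) + 1) \<and>
           (real k = n * m / (2 * log (real d - 1) (m / d) + 1) \<longleftrightarrow> n = M)"
    and "even g \<Longrightarrow> real k \<le> n * d * m / (4 * log (real d - 1) (m / 2)) \<and>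
           (real k = n * d * m / (4 * log (real d - 1) (m / 2)) \<longleftrightarrow> n = M)"
proof -
  define c :: real where "c = (if odd g then 1 / 2 else 0)"
  define s :: real where "s = (if odd g then real d else 2)"
  define B where "B = real n * real d / 2 * (m / s / (log (real d - 1) (m / s) + c))"
  have bound: "real k \<le> B" "real k = B \<longleftrightarrow> n = M"
    using kissing_bound_of_counts_uniform[OF counts] by (simp_all add: B_def m_def c_def s_def)
  show "odd g \<Longrightarrow> real k \<le> n * m / (2 * log (real d - 1) (m / d) + 1) \<and>
           (real k = n * m / (2 * log (real d - 1) (m / d) + 1) \<longleftrightarrow> n = M)"
  proof -
    assume "odd g"
    moreover have "m / d / (log (real d - 1) (m / d) + 1 / 2) =
        2 * m / (d * (2 * log (real d - 1) (m / d) + 1))"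
      by (simp add: field_split_simps)
    ultimately have "B = n * m / (2 * log (real d - 1) (m / d) + 1)"
      using counts(1) by (simp add: B_def c_def s_def)
    then show ?thesis using bound by simp
  qed
  show "even g \<Longrightarrow> real k \<le> n * d * m / (4 * log (real d - 1) (m / 2)) \<and>
           (real k = n * d * m / (4 * log (real d - 1) (m / 2)) \<longleftrightarrow> n = M)"
    using bound by (simp add: B_def c_def s_def)
qed

theorem corollary1p2:
  fixes V :: "'v set" and D :: "'e set" and rv :: "'e \<Rightarrow> 'e" and tail :: "'e \<Rightarrow> 'v"
    and d :: nat
  assumes "mgraph V D rv tail"
    and "d \<ge> 3"
    and "connected_mg V D rv tail"
    and "regular_mg V D tail d"
    and "girth_mg D rv tail \<ge> 3"
  shows "let n = real (card V); g = girth_mg D rv tail; k = real (kiss_mg D rv tail);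
             m = n * (real d - 2) + 2 in
         (odd g \<longrightarrow>
            (let B = n * m / (2 * log (real d - 1) (m / real d) + 1) in
               k \<le> B \<and> (k = B \<longleftrightarrow> moore_graph V D rv tail))) \<and>
         (even g \<longrightarrow>
            (let B = n * real d * m / (4 * log (real d - 1) (m / 2)) in
               k \<le> B \<and> (k = B \<longleftrightarrow> moore_graph V D rv tail)))"
proof -
  interpret regular_multigraph V D rv tail d using assms(1,4) by unfold_locales
  have "V \<noteq> {}" using assms(3) by (simp add: connected_mg_def)
  then have "0 < card V" using finite_V by (simp add: card_gt_0_iff)
  have "0 < d" "2 \<le> d" using assms(2) by simp_all
  note bounds = kissing_bound_of_counts[OF assms(2,5) \<open>0 < card V\<close> girth_mult_kiss_le[OF assms(5)]
      moore_number_le_card_V[OF assms(5) \<open>V \<noteq> {}\<close> \<open>0 < d\<close>]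
      moore_number_identity[OF \<open>2 \<le> d\<close> assms(5)] girth_mult_kiss_eq_if_moore[OF assms(5)]]
  show ?thesis using bounds moore_graph_iff[OF assms(3)] by (auto simp: Let_def)
qed

end
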